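(* Let $p\in(0,1)$ be fixed. Then with high probability $$ \mathrm{sat}\left(G\left(n,p\right),C_4\right)\geqslant\frac{3}{2} n(1+o(1)). $$
   Context: $G(n,p)$ is the binomial random graph on vertex set $[n]$ in which each pair of vertices is adjacent independently with probability $p$. A property holds with high probability if its probability tends to $1$ as $n\to\infty$; $o(1)$ denotes a function of $n$ tending to $0$. $C_4$ is the cycle on $4$ vertices. For graphs $F,G$, a spanning subgraph $H\subseteq G$ is $F$-saturated in $G$ if $H$ contains no copy of $F$ but adding to $H$ any edge of $G$ not in $H$ creates a copy of $F$; $\mathrm{sat}(G,F)$ is the minimum number of edges of an $F$-saturated graph in $G$. *)

theory Defs
  imports "HOL-Probability.Probability"
begin

text \<open>Graphs on vertex set [n] (represented as {0..<n}) are sets of edges,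
each edge being a 2-element subset of the vertex set.\<close>

definition all_pairs :: "nat \<Rightarrow> nat set set" where
  "all_pairs n = {e. e \<subseteq> {..<n} \<and> card e = 2}"

definition Gnp :: "nat \<Rightarrow> real \<Rightarrow> nat set set pmf" where
  "Gnp n p = map_pmf (\<lambda>f. {e \<in> all_pairs n. f e})
              (Pi_pmf (all_pairs n) False (\<lambda>_. bernoulli_pmf p))"

definition has_C4 :: "nat set set \<Rightarrow> bool" where
  "has_C4 H \<longleftrightarrow> (\<exists>a b c d. distinct [a, b, c, d] \<and>
      {a, b} \<in> H \<and> {b, c} \<in> H \<and> {c, d} \<in> H \<and> {d, a} \<in> H)"

definition C4_saturated_in :: "nat set set \<Rightarrow> nat set set \<Rightarrow> bool" where
  "C4_saturated_in G H \<longleftrightarrow> H \<subseteq> G \<and> \<not> has_C4 H \<and>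
      (\<forall>e \<in> G - H. has_C4 (insert e H))"

definition sat_C4 :: "nat set set \<Rightarrow> nat" where
  "sat_C4 G = Min (card ` {H. C4_saturated_in G H})"

end

theory Submission
  imports Defs "HOL-Real_Asymp.Real_Asymp"
begin

text \<open>Let H be a C4-saturated subgraph of G. A pair that is an edge of G but not of H is joined
  by a path of length 3 in H. Consequently the leaves of H hanging at a common vertex are independent
  in G, and the vertices of H-degree at most 2 all of whose neighbours have H-degree below D have at
  most 2 D^2 + 2 G-neighbours among themselves, so greedily they contain an independent set of
  proportional size. If G has no independent set of size K, counting degrees gives
  3 n \<le> 2 |H| + (K + 3) |B| + 3 K (2 D^2 + 3), where B is the set of vertices of H-degree at least D,
  and D |B| \<le> 2 |H|. In G(n, p) there is with high probability no independent set of size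
  K = \<lfloor>n powr (1/8)\<rfloor>, and D = K^3 + 3 then yields |H| \<ge> 3/2 n (1 - o(1)).\<close>

lemma card_UN_le_mult:
  assumes "finite I" "card I \<le> k" "\<And>i. i \<in> I \<Longrightarrow> card (A i) \<le> m"
  shows "card (\<Union>i\<in>I. A i) \<le> k * m"
proof -
  have "card (\<Union>i\<in>I. A i) \<le> (\<Sum>i\<in>I. card (A i))"
    using assms(1) by (rule card_UN_le)
  also have "\<dots> \<le> card I * m"
    using assms(3) sum_bounded_above[of I "\<lambda>i. card (A i)" m] by simp
  also have "\<dots> \<le> k * m"
    using assms(2) by simp
  finally show ?thesis .
qed

lemma greedy_independent_subset:
  fixes R :: "'a \<Rightarrow> 'a \<Rightarrow> bool"
  assumes "finite M" "symp R" "\<And>v. v \<in> M \<Longrightarrow> card {w\<in>M. R v w} \<le> d"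
  shows "\<exists>I\<subseteq>M. (\<forall>v\<in>I. \<forall>w\<in>I. v \<noteq> w \<longrightarrow> \<not> R v w) \<and> card M \<le> (d + 1) * card I"
  using assms(1,3)
proof (induction M rule: finite_psubset_induct)
  case (psubset M)
  show ?case
  proof (cases "M = {}")
    case True
    then show ?thesis by simp
  next
    case False
    then obtain v where v: "v \<in> M" by blast
    define N where "N = insert v {w\<in>M. R v w}"
    have N: "N \<subseteq> M" "card N \<le> d + 1"
      using v psubset.prems[OF v] psubset.hyps unfolding N_def by (auto simp: card_insert_if)
    have "M - N \<subset> M"
      using v unfolding N_def by blast
    moreover have "card {w\<in>M - N. R u w} \<le> d" if "u \<in> M - N" for u
      using that psubset.hyps by (intro order.trans[OF card_mono psubset.prems[of u]]) auto
    ultimately obtain I where I: "I \<subseteq> M - N" "\<forall>x\<in>I. \<forall>y\<in>I. x \<noteq> y \<longrightarrow> \<not> R x y"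
        "card (M - N) \<le> (d + 1) * card I"
      using psubset.IH by meson
    have "\<forall>w\<in>I. \<not> R v w \<and> \<not> R w v"
      using I(1) assms(2) unfolding N_def by (auto dest: sympD)
    with I(2) have "\<forall>x\<in>insert v I. \<forall>y\<in>insert v I. x \<noteq> y \<longrightarrow> \<not> R x y"
      by blast
    moreover have "card M \<le> (d + 1) * card (insert v I)"
    proof -
      have "card M = card (M - N) + card N"
        using card_Diff_subset[OF finite_subset[OF N(1) psubset.hyps] N(1)]
          card_mono[OF psubset.hyps N(1)] by simp
      moreover have "v \<notin> I" "finite I"
        using I(1) psubset.hyps unfolding N_def by (auto intro: finite_subset)
      ultimately show ?thesis
        using I(3) N(2) by simp
    qed
    moreover have "insert v I \<subseteq> M"
      using I(1) v by blast
    ultimately show ?thesis by blast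
  qed
qed

definition neighbours :: "nat set set \<Rightarrow> nat \<Rightarrow> nat set" where
  "neighbours H v = {u. {v, u} \<in> H}"

abbreviation deg :: "nat set set \<Rightarrow> nat \<Rightarrow> nat" where
  "deg H v \<equiv> card (neighbours H v)"

definition independent_set :: "nat set set \<Rightarrow> nat set \<Rightarrow> bool" where
  "independent_set G S \<longleftrightarrow> (\<forall>a\<in>S. \<forall>b\<in>S. a \<noteq> b \<longrightarrow> {a, b} \<notin> G)"

lemma finite_all_pairs: "finite (all_pairs n)"
  unfolding all_pairs_def by (rule finite_subset[of _ "Pow {..<n}"]) auto

lemma neighbours_sym: "u \<in> neighbours H v \<longleftrightarrow> v \<in> neighbours H u"
  unfolding neighbours_def by (simp add: insert_commute)

lemma neighbours_subset:
  assumes "H \<subseteq> all_pairs n"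
  shows "neighbours H v \<subseteq> {..<n}"
proof
  fix u assume "u \<in> neighbours H v"
  then have "{v, u} \<subseteq> {..<n}"
    using assms unfolding neighbours_def all_pairs_def by blast
  then show "u \<in> {..<n}" by blast
qed

lemma finite_neighbours: "H \<subseteq> all_pairs n \<Longrightarrow> finite (neighbours H v)"
  using finite_subset[OF neighbours_subset finite_lessThan] .

lemma not_in_neighbours_self:
  assumes "H \<subseteq> all_pairs n"
  shows "v \<notin> neighbours H v"
proof
  assume "v \<in> neighbours H v"
  then have "card {v} = 2"
    using assms unfolding neighbours_def all_pairs_def by auto
  then show False by simp
qed

lemma sum_deg_le:
  assumes H: "H \<subseteq> all_pairs n"
  shows "(\<Sum>v<n. deg H v) \<le> 2 * card H"
proof -
  have "(\<Sum>v<n. deg H v) = card (SIGMA v:{..<n}. neighbours H v)"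
    using finite_neighbours[OF H] by simp
  also have "\<dots> \<le> card (H \<times> (UNIV :: bool set))"
  proof (rule card_inj_on_le)
    show "inj_on (\<lambda>(v, u). ({v, u}, v < u)) (SIGMA v:{..<n}. neighbours H v)"
      using not_in_neighbours_self[OF H] by (intro inj_onI) (auto simp: doubleton_eq_iff)
    show "(\<lambda>(v, u). ({v, u}, v < u)) ` (SIGMA v:{..<n}. neighbours H v) \<subseteq> H \<times> UNIV"
      unfolding neighbours_def by auto
    show "finite (H \<times> (UNIV :: bool set))"
      using finite_subset[OF H finite_all_pairs] by simp
  qed
  also have "\<dots> = 2 * card H"
    by (simp add: card_cartesian_product)
  finally show ?thesis .
qed

lemma card_independent_set_less:
  assumes "\<not> (\<exists>S\<subseteq>V. card S = K \<and> independent_set G S)"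
    and "S \<subseteq> V" "independent_set G S"
  shows "card S < K"
proof (rule ccontr)
  assume "\<not> card S < K"
  then obtain T where "T \<subseteq> S" "card T = K"
    by (meson not_less obtain_subset_with_card_n)
  moreover from this have "independent_set G T"
    using assms(3) unfolding independent_set_def by blast
  ultimately show False
    using assms(1,2) by blast
qed

lemma path3_of_C4_through_edge:
  assumes "distinct [a, b, c, d]" "{a, b} = {v, w}"
    and "{b, c} \<in> insert {v, w} H" "{c, d} \<in> insert {v, w} H" "{d, a} \<in> insert {v, w} H"
  shows "\<exists>x y. distinct [v, x, y, w] \<and> {v, x} \<in> H \<and> {x, y} \<in> H \<and> {y, w} \<in> H"
proof -
  have "c \<notin> {v, w}" "d \<notin> {v, w}"
    using assms(1) unfolding assms(2)[symmetric] by auto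
  then have H: "{b, c} \<in> H" "{c, d} \<in> H" "{d, a} \<in> H"
    using assms(3-5) by blast+
  from assms(2) consider "a = v" "b = w" | "a = w" "b = v"
    by (metis doubleton_eq_iff)
  then show ?thesis
  proof cases
    case 1
    then have "distinct [v, d, c, w] \<and> {v, d} \<in> H \<and> {d, c} \<in> H \<and> {c, w} \<in> H"
      using assms(1) H by (auto simp: insert_commute)
    then show ?thesis by blast
  next
    case 2
    then have "distinct [v, c, d, w] \<and> {v, c} \<in> H \<and> {c, d} \<in> H \<and> {d, w} \<in> H"
      using assms(1) H by (auto simp: insert_commute)
    then show ?thesis by blast
  qed
qed

lemma C4_saturated_non_edge_path3:
  assumes "C4_saturated_in G H" "{v, w} \<in> G" "{v, w} \<notin> H"
  shows "\<exists>x y. distinct [v, x, y, w] \<and> {v, x} \<in> H \<and> {x, y} \<in> H \<and> {y, w} \<in> H"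
proof -
  have "has_C4 (insert {v, w} H)" and no_C4: "\<not> has_C4 H"
    using assms unfolding C4_saturated_in_def by blast+
  then obtain a b c d where cycle: "distinct [a, b, c, d]"
    "{a, b} \<in> insert {v, w} H" "{b, c} \<in> insert {v, w} H"
    "{c, d} \<in> insert {v, w} H" "{d, a} \<in> insert {v, w} H"
    unfolding has_C4_def by (elim exE conjE)
  have "\<not> ({a, b} \<in> H \<and> {b, c} \<in> H \<and> {c, d} \<in> H \<and> {d, a} \<in> H)"
    using no_C4 cycle(1) unfolding has_C4_def by blast
  then consider "{a, b} = {v, w}" | "{b, c} = {v, w}" | "{c, d} = {v, w}" | "{d, a} = {v, w}"
    using cycle(2-5) unfolding insert_iff by argo
  then show ?thesis
  proof cases
    case 1
    then show ?thesis using cycle by (intro path3_of_C4_through_edge[of a b c d]) auto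
  next
    case 2
    then show ?thesis using cycle by (intro path3_of_C4_through_edge[of b c d a]) auto
  next
    case 3
    then show ?thesis using cycle by (intro path3_of_C4_through_edge[of c d a b]) auto
  next
    case 4
    then show ?thesis using cycle by (intro path3_of_C4_through_edge[of d a b c]) auto
  qed
qed

lemma C4_saturated_in_exists:
  assumes "finite G"
  shows "\<exists>H. C4_saturated_in G H"
proof -
  define F where "F = {H. H \<subseteq> G \<and> \<not> has_C4 H}"
  have "finite F"
    unfolding F_def using assms by simp
  moreover have "{} \<in> F"
    unfolding F_def has_C4_def by simp
  ultimately obtain H where H: "H \<in> F" and maximal: "\<And>H'. H' \<in> F \<Longrightarrow> H \<subseteq> H' \<Longrightarrow> H' = H"
    using finite_has_maximal[of F] by blast
  have "has_C4 (insert e H)" if "e \<in> G - H" for e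
    using maximal[of "insert e H"] H that unfolding F_def by blast
  with H show ?thesis
    unfolding F_def C4_saturated_in_def by blast
qed

lemma sat_C4_attained:
  assumes "finite G"
  shows "\<exists>H. C4_saturated_in G H \<and> sat_C4 G = card H"
proof -
  have "finite {H. C4_saturated_in G H}"
    using assms unfolding C4_saturated_in_def by simp
  moreover have "{H. C4_saturated_in G H} \<noteq> {}"
    using C4_saturated_in_exists[OF assms] by blast
  ultimately have "sat_C4 G \<in> card ` {H. C4_saturated_in G H}"
    unfolding sat_C4_def by (intro Min_in) auto
  then show ?thesis
    by blast
qed

definition high_degree :: "nat \<Rightarrow> nat set set \<Rightarrow> nat \<Rightarrow> nat set" where
  "high_degree n H D = {v\<in>{..<n}. D \<le> deg H v}"

definition secluded :: "nat \<Rightarrow> nat set set \<Rightarrow> nat \<Rightarrow> nat set" where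
  "secluded n H D = {v\<in>{..<n}. deg H v \<le> 2 \<and> (\<forall>u\<in>neighbours H v. deg H u < D)}"

definition pendants :: "nat set set \<Rightarrow> nat \<Rightarrow> nat set" where
  "pendants H x = {v. neighbours H v = {x}}"

lemma pendants_subset_neighbours: "pendants H x \<subseteq> neighbours H x"
  unfolding pendants_def using neighbours_sym by blast

lemma independent_set_pendants:
  assumes "C4_saturated_in G H"
  shows "independent_set G (pendants H x)"
  unfolding independent_set_def
proof (intro ballI impI notI)
  fix v w
  assume v: "v \<in> pendants H x" and w: "w \<in> pendants H x" and "v \<noteq> w" and "{v, w} \<in> G"
  show False
  proof (cases "{v, w} \<in> H")
    case True
    then have "w \<in> neighbours H v" "v \<in> neighbours H w"
      using neighbours_sym unfolding neighbours_def by blast+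
    with v w \<open>v \<noteq> w\<close> show False
      unfolding pendants_def by simp
  next
    case False
    with assms \<open>{v, w} \<in> G\<close> obtain a b
      where "distinct [v, a, b, w]" "{v, a} \<in> H" "{b, w} \<in> H"
      using C4_saturated_non_edge_path3 by blast
    then have "a \<in> neighbours H v" "b \<in> neighbours H w"
      using neighbours_sym unfolding neighbours_def by blast+
    with v w \<open>distinct [v, a, b, w]\<close> show False
      unfolding pendants_def by simp
  qed
qed

lemma card_secluded_G_neighbours:
  assumes sat: "C4_saturated_in G H" and H: "H \<subseteq> all_pairs n"
    and v: "v \<in> secluded n H D"
  shows "card {w\<in>secluded n H D. {v, w} \<in> G \<and> v \<noteq> w} \<le> 2 * D\<^sup>2 + 2"
proof -
  let ?N = "neighbours H"
  define U where "U = (\<Union>a\<in>?N v. \<Union>b\<in>{b\<in>?N a. deg H b < D}. ?N b)"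
  have fin: "finite (?N u)" for u
    using finite_neighbours[OF H] .
  have deg_v: "deg H v \<le> 2"
    using v unfolding secluded_def by blast
  have "{w\<in>secluded n H D. {v, w} \<in> G \<and> v \<noteq> w} \<subseteq> ?N v \<union> U"
  proof
    fix w assume w: "w \<in> {w\<in>secluded n H D. {v, w} \<in> G \<and> v \<noteq> w}"
    show "w \<in> ?N v \<union> U"
    proof (cases "{v, w} \<in> H")
      case True
      then show ?thesis unfolding neighbours_def by blast
    next
      case False
      moreover have "{v, w} \<in> G"
        using w by blast
      ultimately obtain a b where "{v, a} \<in> H" "{a, b} \<in> H" "{b, w} \<in> H"
        using C4_saturated_non_edge_path3[OF sat] by blast
      then have "a \<in> ?N v" "b \<in> ?N a" "w \<in> ?N b" "b \<in> ?N w"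
        using neighbours_sym unfolding neighbours_def by blast+
      moreover have "deg H b < D"
        using w \<open>b \<in> ?N w\<close> unfolding secluded_def by blast
      ultimately show ?thesis
        unfolding U_def by blast
    qed
  qed
  moreover have "card U \<le> 2 * (D * D)"
    unfolding U_def
  proof (rule card_UN_le_mult)
    fix a assume "a \<in> ?N v"
    then have "deg H a < D"
      using v unfolding secluded_def by blast
    show "card (\<Union>b\<in>{b\<in>?N a. deg H b < D}. ?N b) \<le> D * D"
    proof (rule card_UN_le_mult)
      show "card {b\<in>?N a. deg H b < D} \<le> D"
        using card_mono[OF fin[of a], of "{b\<in>?N a. deg H b < D}"] \<open>deg H a < D\<close> by auto
    qed (simp_all add: fin)
  qed (simp_all add: fin deg_v)
  moreover have "finite U"
    unfolding U_def by (simp add: fin)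
  ultimately have "card {w\<in>secluded n H D. {v, w} \<in> G \<and> v \<noteq> w} \<le> card (?N v \<union> U)"
    using fin[of v] by (intro card_mono) auto
  also have "\<dots> \<le> card (?N v) + card U"
    by (rule card_Un_le)
  also have "\<dots> \<le> 2 * D\<^sup>2 + 2"
    using deg_v \<open>card U \<le> 2 * (D * D)\<close> by (simp add: power2_eq_square)
  finally show ?thesis .
qed

lemma card_secluded_le:
  assumes sat: "C4_saturated_in G H" and H: "H \<subseteq> all_pairs n"
    and alpha: "\<And>S. S \<subseteq> {..<n} \<Longrightarrow> independent_set G S \<Longrightarrow> card S < K"
  shows "card (secluded n H D) \<le> (2 * D\<^sup>2 + 3) * K"
proof -
  define R where "R v w \<longleftrightarrow> {v, w} \<in> G \<and> v \<noteq> w" for v w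
  have "finite (secluded n H D)"
    unfolding secluded_def by simp
  moreover have "symp R"
    unfolding R_def by (rule sympI) (simp add: insert_commute)
  moreover have "card {w\<in>secluded n H D. R v w} \<le> 2 * D\<^sup>2 + 2" if "v \<in> secluded n H D" for v
    unfolding R_def using sat H that by (rule card_secluded_G_neighbours)
  ultimately have "\<exists>I\<subseteq>secluded n H D. (\<forall>v\<in>I. \<forall>w\<in>I. v \<noteq> w \<longrightarrow> \<not> R v w)
      \<and> card (secluded n H D) \<le> (2 * D\<^sup>2 + 2 + 1) * card I"
    by (rule greedy_independent_subset)
  then obtain I where I: "I \<subseteq> secluded n H D" "\<forall>v\<in>I. \<forall>w\<in>I. v \<noteq> w \<longrightarrow> \<not> R v w"
      "card (secluded n H D) \<le> (2 * D\<^sup>2 + 2 + 1) * card I"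
    by blast
  have "independent_set G I"
    using I(2) unfolding independent_set_def R_def by blast
  moreover have "I \<subseteq> {..<n}"
    using I(1) unfolding secluded_def by blast
  ultimately have "card I < K"
    by (rule alpha[rotated])
  then have "(2 * D\<^sup>2 + 2 + 1) * card I \<le> (2 * D\<^sup>2 + 3) * K"
    by (intro mult_mono) auto
  with I(3) show ?thesis
    by (rule order_trans)
qed

lemma card_pendants_less:
  assumes sat: "C4_saturated_in G H" and H: "H \<subseteq> all_pairs n"
    and alpha: "\<And>S. S \<subseteq> {..<n} \<Longrightarrow> independent_set G S \<Longrightarrow> card S < K"
  shows "card (pendants H x) < K"
proof (rule alpha)
  show "pendants H x \<subseteq> {..<n}"
    using pendants_subset_neighbours neighbours_subset[OF H] by (rule order_trans)
  show "independent_set G (pendants H x)"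
    using sat by (rule independent_set_pendants)
qed

lemma card_high_degree_le:
  assumes H: "H \<subseteq> all_pairs n"
  shows "D * card (high_degree n H D) \<le> 2 * card H"
proof -
  have "card (high_degree n H D) * D \<le> (\<Sum>v\<in>high_degree n H D. deg H v)"
    using sum_bounded_below[of "high_degree n H D" D "deg H"] unfolding high_degree_def by simp
  also have "\<dots> \<le> (\<Sum>v<n. deg H v)"
    unfolding high_degree_def by (rule sum_mono2) auto
  also have "\<dots> \<le> 2 * card H"
    using H by (rule sum_deg_le)
  finally show ?thesis
    by (simp add: mult.commute)
qed

lemma three_n_le_degree_classes:
  assumes H: "H \<subseteq> all_pairs n"
  shows "3 * n \<le> 2 * card H + 3 * card (high_degree n H D) + 3 * card (secluded n H D)
                 + card (\<Union>x\<in>high_degree n H D. pendants H x)"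
proof -
  let ?N = "neighbours H"
  define V where "V = {..<n :: nat}"
  define B where "B = high_degree n H D"
  define M where "M = secluded n H D"
  define Q where "Q = (\<Union>x\<in>B. ?N x)"
  define P where "P = (\<Union>x\<in>B. pendants H x)"
  have fin: "finite (?N v)" for v
    using finite_neighbours[OF H] .
  have "B \<subseteq> V" "M \<subseteq> V"
    unfolding B_def M_def V_def high_degree_def secluded_def by auto
  moreover have "finite B"
    unfolding B_def high_degree_def by simp
  moreover have "P \<subseteq> Q"
    unfolding P_def Q_def using pendants_subset_neighbours by blast
  ultimately have fin_sets: "finite V" "finite B" "finite M" "finite Q" "finite P"
    unfolding Q_def V_def using fin by (auto intro: finite_subset)
  have per_vertex: "3 \<le> deg H v + 3 * of_bool (v \<in> M) + of_bool (v \<in> Q) + of_bool (v \<in> P)"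
    if v: "v \<in> V - B" for v
  proof (cases "deg H v \<le> 2 \<and> v \<notin> M")
    case True
    then obtain u where u: "u \<in> ?N v" "D \<le> deg H u"
      using v unfolding M_def V_def secluded_def by auto
    then have "u \<in> B" "v \<in> Q"
      using neighbours_subset[OF H] neighbours_sym unfolding B_def Q_def high_degree_def by blast+
    moreover have "deg H v \<ge> 1"
      using u(1) fin[of v] by (auto simp: Suc_le_eq card_gt_0_iff)
    moreover have "v \<in> P" if "deg H v = 1"
    proof -
      have "?N v = {u}"
        using that u(1) by (auto simp: card_1_singleton_iff)
      then show ?thesis
        using \<open>u \<in> B\<close> unfolding P_def pendants_def by blast
    qed
    ultimately show ?thesis
      by (cases "deg H v = 1") auto
  qed auto
  have of_bool_sum: "(\<Sum>v\<in>V - B. of_bool (v \<in> X)) \<le> card X" if "finite X" for X :: "nat set"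
    using that fin_sets(1) by (simp add: sum_of_bool_eq card_mono)
  have "3 * card (V - B) = (\<Sum>v\<in>V - B. 3)"
    by simp
  also have "\<dots> \<le>
      (\<Sum>v\<in>V - B. deg H v + 3 * of_bool (v \<in> M) + of_bool (v \<in> Q) + of_bool (v \<in> P))"
    using per_vertex by (rule sum_mono)
  also have "\<dots> \<le> (\<Sum>v\<in>V - B. deg H v) + 3 * card M + card Q + card P"
    using of_bool_sum[of M] of_bool_sum[of Q] of_bool_sum[of P] fin_sets
    by (simp add: sum.distrib sum_distrib_left[symmetric])
  also have "card Q \<le> (\<Sum>x\<in>B. deg H x)"
    unfolding Q_def using fin_sets(2) by (rule card_UN_le)
  finally have "3 * card (V - B) \<le> (\<Sum>v\<in>V. deg H v) + 3 * card M + card P"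
    using sum.subset_diff[OF \<open>B \<subseteq> V\<close> fin_sets(1), of "deg H"] by linarith
  moreover have "card V = card (V - B) + card B"
    using card_Diff_subset[OF fin_sets(2) \<open>B \<subseteq> V\<close>] card_mono[OF fin_sets(1) \<open>B \<subseteq> V\<close>] by simp
  moreover have "(\<Sum>v\<in>V. deg H v) \<le> 2 * card H"
    unfolding V_def using H by (rule sum_deg_le)
  ultimately show ?thesis
    unfolding V_def B_def M_def P_def by simp
qed

lemma three_n_le_C4_saturated:
  assumes G: "G \<subseteq> all_pairs n" and sat: "C4_saturated_in G H"
    and alpha: "\<And>S. S \<subseteq> {..<n} \<Longrightarrow> independent_set G S \<Longrightarrow> card S < K"
  shows "3 * n \<le> 2 * card H + (K + 3) * card (high_degree n H D) + 3 * K * (2 * D\<^sup>2 + 3)"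
proof -
  have H: "H \<subseteq> all_pairs n"
    using sat G unfolding C4_saturated_in_def by blast
  have "card (\<Union>x\<in>high_degree n H D. pendants H x) \<le> card (high_degree n H D) * K"
    using card_pendants_less[OF sat H alpha]
    by (intro card_UN_le_mult) (auto simp: high_degree_def less_imp_le)
  then show ?thesis
    using three_n_le_degree_classes[OF H, of D] card_secluded_le[OF sat H alpha, of D]
    by (simp add: algebra_simps)
qed

definition sat_error :: "nat \<Rightarrow> nat \<Rightarrow> nat \<Rightarrow> real" where
  "sat_error K D n = 4 * (real K + 3) / (3 * real D) + real K * (2 * (real D)\<^sup>2 + 3) / real n"

lemma sat_C4_lower_bound:
  assumes G: "G \<subseteq> all_pairs n"
    and alpha: "\<And>S. S \<subseteq> {..<n} \<Longrightarrow> independent_set G S \<Longrightarrow> card S < K"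
    and "0 < n" "0 < D"
  shows "3 / 2 * real n * (1 - sat_error K D n) \<le> real (sat_C4 G)"
proof -
  obtain H where sat: "C4_saturated_in G H" and sat_C4: "sat_C4 G = card H"
    using sat_C4_attained finite_subset[OF G finite_all_pairs] by blast
  have H: "H \<subseteq> all_pairs n"
    using sat G unfolding C4_saturated_in_def by blast
  define h where "h = real (card H)"
  define b where "b = real (card (high_degree n H D))"
  have count: "3 * real n \<le> 2 * h + (real K + 3) * b + 3 * real K * (2 * (real D)\<^sup>2 + 3)"
    using three_n_le_C4_saturated[OF G sat alpha, of D]
    unfolding h_def b_def
    by (metis (mono_tags) of_nat_le_iff of_nat_add of_nat_mult of_nat_power of_nat_numeral)
  have high: "real D * b \<le> 2 * h"
    using card_high_degree_le[OF H, of D]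
    unfolding h_def b_def by (metis of_nat_le_iff of_nat_mult of_nat_numeral)
  have "3 / 2 * real n * (1 - sat_error K D n) =
      3 / 2 * real n - 2 * real n * (real K + 3) / real D - 3 / 2 * real K * (2 * (real D)\<^sup>2 + 3)"
    using assms(3,4) by (simp add: sat_error_def field_simps)
  also have "\<dots> \<le> h"
  proof (cases "h \<le> 2 * n")
    case True
    with high \<open>0 < D\<close> have "b \<le> 4 * real n / real D"
      by (simp add: field_simps)
    then have "(real K + 3) * b \<le> (real K + 3) * (4 * real n / real D)"
      by (intro mult_left_mono) auto
    also have "\<dots> = 2 * (2 * real n * (real K + 3) / real D)"
      by simp
    finally show ?thesis
      using count by linarith
  next
    case False
    moreover have "0 \<le> 2 * real n * (real K + 3) / real D"
      and "0 \<le> 3 / 2 * real K * (2 * (real D)\<^sup>2 + 3)"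
      by simp_all
    ultimately show ?thesis
      by linarith
  qed
  finally show ?thesis
    unfolding sat_C4 h_def .
qed

lemma set_pmf_Gnp_subset: "G \<in> set_pmf (Gnp n p) \<Longrightarrow> G \<subseteq> all_pairs n"
  unfolding Gnp_def by auto

lemma prob_Gnp_independent_set_le:
  assumes p: "0 \<le> p" "p \<le> 1" and S: "S \<subseteq> {..<n}"
  shows "measure_pmf.prob (Gnp n p) {G. independent_set G S} \<le> (1 - p) ^ (card S choose 2)"
proof -
  define X where "X = Pi_pmf (all_pairs n) False (\<lambda>_. bernoulli_pmf p)"
  define E where "E = {e. e \<subseteq> S \<and> card e = 2}"
  define A where "A e = (if e \<in> E then {False} else UNIV)" for e
  have E: "E \<subseteq> all_pairs n"
    using S unfolding E_def all_pairs_def by auto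
  have "measure_pmf.prob (Gnp n p) {G. independent_set G S}
      = measure_pmf.prob X {f. independent_set {e \<in> all_pairs n. f e} S}"
    unfolding Gnp_def X_def by simp
  also have "\<dots> \<le> measure_pmf.prob X (Pi (all_pairs n) A)"
  proof (rule measure_pmf.finite_measure_mono)
    show "{f. independent_set {e \<in> all_pairs n. f e} S} \<subseteq> Pi (all_pairs n) A"
    proof (intro subsetI Pi_I)
      fix f e
      assume f: "f \<in> {f. independent_set {e \<in> all_pairs n. f e} S}" and e: "e \<in> all_pairs n"
      show "f e \<in> A e"
      proof (cases "e \<in> E")
        case True
        then obtain a b where "e = {a, b}" "a \<noteq> b" "a \<in> S" "b \<in> S"
          unfolding E_def by (auto simp: card_2_iff)
        then show ?thesis
          using f e True unfolding independent_set_def A_def by auto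
      qed (simp add: A_def)
    qed
  qed simp
  also have "\<dots> = (\<Prod>e\<in>all_pairs n. measure_pmf.prob (bernoulli_pmf p) (A e))"
    unfolding X_def by (rule measure_Pi_pmf_Pi[OF finite_all_pairs])
  also have "\<dots> = (\<Prod>e\<in>all_pairs n. if e \<in> E then 1 - p else 1)"
    by (rule prod.cong) (auto simp: A_def measure_pmf_single p)
  also have "\<dots> = (1 - p) ^ card E"
    using E by (simp add: prod.If_cases[OF finite_all_pairs] Int_absorb1)
  also have "card E = card S choose 2"
    unfolding E_def using S by (intro n_subsets) (auto intro: finite_subset)
  finally show ?thesis .
qed

lemma prob_Gnp_has_independent_set_le:
  assumes "0 \<le> p" "p \<le> 1"
  shows "measure_pmf.prob (Gnp n p) {G. \<exists>S\<subseteq>{..<n}. card S = K \<and> independent_set G S}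
         \<le> real (n choose K) * (1 - p) ^ (K choose 2)"
proof -
  define SS where "SS = {S. S \<subseteq> {..<n} \<and> card S = K}"
  have "finite SS"
    unfolding SS_def by simp
  have "measure_pmf.prob (Gnp n p) {G. \<exists>S\<subseteq>{..<n}. card S = K \<and> independent_set G S}
      = measure_pmf.prob (Gnp n p) (\<Union>S\<in>SS. {G. independent_set G S})"
    unfolding SS_def by (rule arg_cong[where f = "measure_pmf.prob _"]) blast
  also have "\<dots> \<le> (\<Sum>S\<in>SS. measure_pmf.prob (Gnp n p) {G. independent_set G S})"
    using \<open>finite SS\<close> by (rule measure_pmf.finite_measure_subadditive_finite) simp
  also have "\<dots> \<le> (\<Sum>S\<in>SS. (1 - p) ^ (K choose 2))"
    using prob_Gnp_independent_set_le[OF assms] unfolding SS_def by (intro sum_mono) auto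
  also have "\<dots> = real (n choose K) * (1 - p) ^ (K choose 2)"
    unfolding SS_def by (simp add: n_subsets)
  finally show ?thesis .
qed

lemma of_nat_choose_two: "real (K choose 2) = real K * (real K - 1) / 2"
proof -
  have "2 * (K choose 2) = K * (K - 1)"
    by (induction K) (auto simp: choose_two algebra_simps)
  then have "2 * real (K choose 2) = real K * real (K - 1)"
    by (metis of_nat_mult of_nat_numeral)
  then show ?thesis
    by (cases K) auto
qed

lemma binomial_mult_exp_le:
  "real (n choose K) * exp (- c) ^ (K choose 2) \<le> (real n * exp (- c * (real K - 1) / 2)) ^ K"
proof -
  have "real (n choose K) \<le> real n ^ K"
    by (cases "K \<le> n") (auto simp: binomial_le_pow binomial_eq_0 simp flip: of_nat_power)
  moreover have "exp (- c) ^ (K choose 2) = exp (- c * (real K - 1) / 2) ^ K"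
    by (simp flip: exp_of_nat_mult add: of_nat_choose_two field_simps)
  ultimately show ?thesis
    by (simp add: power_mult_distrib mult_right_mono)
qed

text \<open>Any K with log n = o(K) and K^7 = o(n) would do: the first condition kills independent
  K-sets in G(n, p), the second makes the error term vanish for D = K^3 + 3.\<close>

definition indep_threshold :: "nat \<Rightarrow> nat" where
  "indep_threshold n = nat \<lfloor>real n powr (1/8)\<rfloor>"

lemma indep_threshold_bounds:
  "real n powr (1/8) - 1 \<le> real (indep_threshold n)" "real (indep_threshold n) \<le> real n powr (1/8)"
proof -
  have "real (indep_threshold n) = of_int \<lfloor>real n powr (1/8)\<rfloor>"
    unfolding indep_threshold_def by simp
  then show "real n powr (1/8) - 1 \<le> real (indep_threshold n)"
    and "real (indep_threshold n) \<le> real n powr (1/8)"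
    by linarith+
qed

lemma tendsto_expected_independent_sets:
  assumes "0 < p" "p < 1"
  shows "(\<lambda>n. real (n choose indep_threshold n) * (1 - p) ^ (indep_threshold n choose 2))
    \<longlonglongrightarrow> 0"
proof -
  define c where "c = - ln (1 - p)"
  have "0 < c" and q: "1 - p = exp (- c)"
    unfolding c_def using assms by simp_all
  define y where "y n = real n * exp (- c * (real n powr (1/8) - 2) / 2)" for n :: nat
  have "y \<longlonglongrightarrow> 0"
    unfolding y_def using \<open>0 < c\<close> by real_asymp
  show ?thesis
  proof (rule tendsto_sandwich[OF _ _ tendsto_const \<open>y \<longlonglongrightarrow> 0\<close>])
    show "\<forall>\<^sub>F n in sequentially.
        0 \<le> real (n choose indep_threshold n) * (1 - p) ^ (indep_threshold n choose 2)"
      using assms by simp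
    show "\<forall>\<^sub>F n in sequentially.
        real (n choose indep_threshold n) * (1 - p) ^ (indep_threshold n choose 2) \<le> y n"
      using order_tendstoD(2)[OF \<open>y \<longlonglongrightarrow> 0\<close> zero_less_one] eventually_ge_at_top[of 1]
    proof eventually_elim
      case (elim n)
      define K where "K = indep_threshold n"
      define z where "z = real n * exp (- c * (real K - 1) / 2)"
      have "1 \<le> real n powr (1/8)"
        using elim(2) by (simp add: ge_one_powr_ge_zero)
      then have "1 \<le> \<lfloor>real n powr (1/8)\<rfloor>"
        by simp
      then have "1 \<le> K"
        unfolding K_def indep_threshold_def by (simp add: le_nat_iff)
      have "z \<le> y n"
        unfolding z_def y_def using indep_threshold_bounds(1)[of n] \<open>0 < c\<close> unfolding K_def
        by (intro mult_left_mono) (auto simp: mult_le_cancel_left_pos)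
      have "real (n choose K) * (1 - p) ^ (K choose 2) \<le> z ^ K"
        unfolding q z_def by (rule binomial_mult_exp_le)
      also have "\<dots> \<le> z"
        using \<open>z \<le> y n\<close> elim(1) \<open>1 \<le> K\<close> unfolding z_def
        by (intro power_decreasing[of 1, simplified]) auto
      finally show ?case
        using \<open>z \<le> y n\<close> unfolding K_def by linarith
    qed
  qed
qed

lemma tendsto_sat_error:
  "(\<lambda>n. sat_error (indep_threshold n) (indep_threshold n ^ 3 + 3) n) \<longlonglongrightarrow> 0"
proof -
  have K_top: "filterlim (\<lambda>n. real (indep_threshold n)) at_top sequentially"
  proof (rule filterlim_at_top_mono)
    show "filterlim (\<lambda>n::nat. real n powr (1/8) - 1) at_top sequentially"
      by real_asymp
  qed (use indep_threshold_bounds in simp)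
  have "((\<lambda>x::real. 4 * (x + 3) / (3 * (x ^ 3 + 3))) \<longlongrightarrow> 0) at_top"
    by real_asymp
  from filterlim_compose[OF this K_top]
  have first: "(\<lambda>n. 4 * (real (indep_threshold n) + 3) / (3 * (real (indep_threshold n) ^ 3 + 3)))
      \<longlonglongrightarrow> 0"
    by simp
  define u where "u n = real n powr (1/8) * (2 * ((real n powr (1/8)) ^ 3 + 3)\<^sup>2 + 3) / real n"
    for n :: nat
  have "u \<longlonglongrightarrow> 0"
    unfolding u_def by real_asymp
  have second:
    "(\<lambda>n. real (indep_threshold n) * (2 * (real (indep_threshold n) ^ 3 + 3)\<^sup>2 + 3) / real n)
      \<longlonglongrightarrow> 0"
  proof (rule tendsto_sandwich[OF _ _ tendsto_const \<open>u \<longlonglongrightarrow> 0\<close>])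
    show "\<forall>\<^sub>F n in sequentially.
        real (indep_threshold n) * (2 * (real (indep_threshold n) ^ 3 + 3)\<^sup>2 + 3) / real n \<le> u n"
    proof (intro always_eventually allI)
      fix n
      have "real (indep_threshold n) \<le> real n powr (1/8)"
        by (rule indep_threshold_bounds(2))
      then show
        "real (indep_threshold n) * (2 * (real (indep_threshold n) ^ 3 + 3)\<^sup>2 + 3) / real n \<le> u n"
        unfolding u_def by (intro divide_right_mono mult_mono add_mono mult_left_mono power_mono) auto
    qed
  qed simp
  show ?thesis
    using tendsto_add[OF first second] by (simp add: sat_error_def)
qed

lemma prob_Gnp_sat_C4_ge:
  assumes "0 \<le> p" "p \<le> 1" "0 < n" "0 < D"
  shows "1 - real (n choose K) * (1 - p) ^ (K choose 2)
    \<le> measure_pmf.prob (Gnp n p) {G. 3 / 2 * real n * (1 - sat_error K D n) \<le> real (sat_C4 G)}"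
proof -
  define Bad where "Bad = {G. \<exists>S\<subseteq>{..<n}. card S = K \<and> independent_set G S}"
  define Good where "Good = {G. 3 / 2 * real n * (1 - sat_error K D n) \<le> real (sat_C4 G)}"
  have "(UNIV - Bad) \<inter> set_pmf (Gnp n p) \<subseteq> Good"
  proof
    fix G assume G: "G \<in> (UNIV - Bad) \<inter> set_pmf (Gnp n p)"
    then have "G \<subseteq> all_pairs n"
      using set_pmf_Gnp_subset by blast
    moreover have "card S < K" if "S \<subseteq> {..<n}" "independent_set G S" for S
      using G that unfolding Bad_def by (intro card_independent_set_less[of "{..<n}" K G]) auto
    ultimately have "3 / 2 * real n * (1 - sat_error K D n) \<le> real (sat_C4 G)"
      using assms(3,4) by (rule sat_C4_lower_bound)
    then show "G \<in> Good"
      unfolding Good_def by simp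
  qed
  have "1 - real (n choose K) * (1 - p) ^ (K choose 2) \<le> 1 - measure_pmf.prob (Gnp n p) Bad"
    using prob_Gnp_has_independent_set_le[OF assms(1,2)] unfolding Bad_def by simp
  also have "\<dots> = measure_pmf.prob (Gnp n p) (UNIV - Bad)"
    using measure_pmf.prob_compl[of Bad "Gnp n p"] by simp
  also have "\<dots> = measure_pmf.prob (Gnp n p) ((UNIV - Bad) \<inter> set_pmf (Gnp n p))"
    by (rule measure_Int_set_pmf[symmetric])
  also have "\<dots> \<le> measure_pmf.prob (Gnp n p) Good"
    using \<open>(UNIV - Bad) \<inter> set_pmf (Gnp n p) \<subseteq> Good\<close>
    by (rule measure_pmf.finite_measure_mono) simp
  finally show ?thesis
    unfolding Good_def .
qed

theorem theorem3:
  fixes p :: real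
  assumes "0 < p" and "p < 1"
  shows "\<exists>f :: nat \<Rightarrow> real. f \<longlonglongrightarrow> 0 \<and>
    (\<lambda>n. measure_pmf.prob (Gnp n p)
        {G. real (sat_C4 G) \<ge> 3 / 2 * real n * (1 + f n)}) \<longlonglongrightarrow> 1"
proof (intro exI conjI)
  let ?K = "indep_threshold"
  let ?err = "\<lambda>n. sat_error (?K n) (?K n ^ 3 + 3) n"
  show "(\<lambda>n. - ?err n) \<longlonglongrightarrow> 0"
    using tendsto_minus[OF tendsto_sat_error] by simp
  have lower: "(\<lambda>n. 1 - real (n choose ?K n) * (1 - p) ^ (?K n choose 2)) \<longlonglongrightarrow> 1"
    using tendsto_diff[OF tendsto_const tendsto_expected_independent_sets[OF assms]] by simp
  have "\<forall>\<^sub>F n in sequentially. 1 - real (n choose ?K n) * (1 - p) ^ (?K n choose 2)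
      \<le> measure_pmf.prob (Gnp n p) {G. real (sat_C4 G) \<ge> 3 / 2 * real n * (1 + - ?err n)}"
    using eventually_gt_at_top[of 0]
    by eventually_elim (use prob_Gnp_sat_C4_ge assms in simp)
  then show "(\<lambda>n. measure_pmf.prob (Gnp n p)
      {G. real (sat_C4 G) \<ge> 3 / 2 * real n * (1 + - ?err n)}) \<longlonglongrightarrow> 1"
    by (rule tendsto_sandwich[OF _ _ lower tendsto_const]) simp
qed

end
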